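(* Let $a,b:\mathbb{Z}_{\ge0}\to\mathbb{C}$, $f(z)=\sum_{n\ge0}(-1)^na(n)\binom{z}{n}$, $g(z)=\sum_{n\ge0}(-1)^nb(n)\binom{z}{n}$, let $\rho$ be the abscissa of convergence of $f$, and let $\varepsilon>0$. Suppose (i) $a(m)\ge0$ and $(\Delta^lb)(m)\ge0$ for all $m,l\in\mathbb{Z}_{\ge0}$; (ii) $\rho<0$; (iii) for every $l\in\mathbb{Z}_{\ge0}$, $(\Delta^lb)(m)=O(m^{-(l+\varepsilon)})$ as $m\to\infty$. Then $f(z)g(z)$ is expressed as a Newton series converging for $\mathrm{Re}(z)>\max\{\rho,-\varepsilon\}$: there is a sequence $c$ such that $\sum_{n\ge0}(-1)^nc(n)\binom{z}{n}$ converges and equals $f(z)g(z)$ for $\mathrm{Re}(z)>\max\{\rho,-\varepsilon\}$.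
   Context: $\binom{z}{n}=\frac{z(z-1)\cdots(z-n+1)}{n!}$. The abscissa of convergence of a series $\sum_n(-1)^na(n)\binom{z}{n}$ is the infimum of real $\sigma$ such that the series converges for all $z$ with $\mathrm{Re}(z)>\sigma$. $(\Delta a)(m)=a(m)-a(m+1)$. *)

theory Defs
  imports "HOL-Analysis.Analysis" "HOL-Library.Landau_Symbols" "HOL-Library.Complex_Order"
begin

definition newton_term :: "(nat \<Rightarrow> complex) \<Rightarrow> complex \<Rightarrow> nat \<Rightarrow> complex" where
  "newton_term a z n = (-1) ^ n * a n * (z gchoose n)"

text \<open>Value of the Newton series (meaningful where it converges).\<close>
definition newton_series :: "(nat \<Rightarrow> complex) \<Rightarrow> complex \<Rightarrow> complex" where
  "newton_series a z = (\<Sum>n. newton_term a z n)"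

text \<open>Abscissa of convergence, as an extended real (infimum over the empty set is +\<infinity>,
  an unbounded-below set gives -\<infinity>).\<close>
definition newton_abscissa :: "(nat \<Rightarrow> complex) \<Rightarrow> ereal" where
  "newton_abscissa a = Inf {ereal \<sigma> | \<sigma>. \<forall>z. Re z > \<sigma> \<longrightarrow> summable (newton_term a z)}"

definition fdiff :: "(nat \<Rightarrow> complex) \<Rightarrow> nat \<Rightarrow> complex" where
  "fdiff a m = a m - a (Suc m)"

end

theory Submission
  imports Defs "HOL-Real_Asymp.Real_Asymp"
begin

text \<open>
  Put \<open>u = -z\<close>, so that the Newton terms become \<open>a(n) (u)\<^sub>n / n!\<close>. Summation by parts turns
  \<open>(u)\<^sub>m / m! \<cdot> \<Sum>\<^sub>j b(j) (u)\<^sub>j / j!\<close> into \<open>\<Sum>\<^sub>j (\<Delta>\<^sup>m b)(j) (u)\<^sub>m\<^sub>+\<^sub>j / (m! j!)\<close>, by induction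
  on \<open>m\<close>, provided the boundary term \<open>(u + m + N) (\<Delta>\<^sup>m b)(N) (u)\<^sub>m\<^sub>+\<^sub>N / (m! N!)\<close> tends to 0.
  For real \<open>u > 0\<close> all quantities are nonnegative and the boundary term converges; a positive
  limit would make the terms of a convergent series as large as \<open>1/N\<close>. For complex \<open>u\<close> the
  boundary term is dominated by the real one at any real \<open>u\<^sub>0 > Re u\<close>.

  Multiplying by \<open>a(m) (u)\<^sub>m / m!\<close> and summing over \<open>m\<close> gives a double series dominated by its
  real counterpart at \<open>u\<^sub>0 = -x\<^sub>0\<close>, \<open>max(\<rho>, -\<epsilon>) < x\<^sub>0 < min(0, Re z)\<close>, which converges since
  \<open>(u\<^sub>0)\<^sub>n / n! = O(n\<^sup>u\<^sup>0\<^sup>-\<^sup>1)\<close> and \<open>b(n) = O(n\<^sup>-\<^sup>\<epsilon>)\<close>. Summing along the diagonals \<open>m + j = k\<close>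
  gives \<open>c(k) = \<Sum>\<^sub>m\<^sub>\<le>\<^sub>k (k choose m) a(m) (\<Delta>\<^sup>m b)(k - m)\<close>. Of the decay hypothesis only the case
  \<open>l = 0\<close> is needed.
\<close>

definition newton_weight :: "'a::field_char_0 \<Rightarrow> nat \<Rightarrow> nat \<Rightarrow> 'a" where
  "newton_weight u m j = pochhammer u (m + j) / (fact m * fact j)"

lemma newton_weight_Suc_left:
  "of_nat (Suc m) * newton_weight u (Suc m) j = (u + of_nat (m + j)) * newton_weight u m j"
  unfolding newton_weight_def by (simp add: pochhammer_rec' field_simps del: of_nat_Suc)

lemma newton_weight_Suc_right:
  "of_nat (Suc j) * newton_weight u m (Suc j) = (u + of_nat (m + j)) * newton_weight u m j"
  unfolding newton_weight_def by (simp add: pochhammer_rec' field_simps del: of_nat_Suc)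

lemma newton_weight_eq_binomial:
  "newton_weight u m j = of_nat (m + j choose m) * newton_weight u (m + j) 0"
  unfolding newton_weight_def by (simp add: binomial_fact)

lemma newton_weight_of_real:
  "newton_weight (of_real x) m j = (of_real (newton_weight x m j) :: 'a::{field_char_0, real_field})"
  unfolding newton_weight_def by (simp add: pochhammer_of_real)

lemma newton_weight_nonneg: "(u::real) > 0 \<Longrightarrow> newton_weight u m j \<ge> 0"
  unfolding newton_weight_def by (simp add: pochhammer_nonneg)

lemma newton_term_eq_weight: "newton_term a z n = a n * newton_weight (- z) n 0"
  unfolding newton_term_def newton_weight_def gbinomial_pochhammer
  by (simp add: mult.assoc flip: power_mult_distrib)

lemma newton_weight_swap: "newton_weight u m j = newton_weight u j m"
  unfolding newton_weight_def by (simp add: ac_simps)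

lemma summation_by_parts_newton_weight:
  fixes u :: "'a::field_char_0"
  shows "(u + of_nat m) * (\<Sum>j<Suc N. d j * newton_weight u m j) =
    of_nat (Suc m) * (\<Sum>j<N. (d j - d (Suc j)) * newton_weight u (Suc m) j)
    + (u + of_nat (m + N)) * (d N * newton_weight u m N)"
proof (induction N)
  case 0
  show ?case using newton_weight_Suc_left[of m u 0] by (simp add: algebra_simps)
next
  case (Suc N)
  let ?W = "newton_weight u"
  have step: "of_nat (Suc m) * ((d N - d (Suc N)) * ?W (Suc m) N)
        + (u + of_nat (m + Suc N)) * (d (Suc N) * ?W m (Suc N))
      = (u + of_nat (m + N)) * (d N * ?W m N) + (u + of_nat m) * (d (Suc N) * ?W m (Suc N))"
  proof -
    have "of_nat (Suc m) * ((d N - d (Suc N)) * ?W (Suc m) N)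
          + (u + of_nat (m + Suc N)) * (d (Suc N) * ?W m (Suc N))
        = (d N - d (Suc N)) * (of_nat (Suc m) * ?W (Suc m) N)
          + d (Suc N) * (of_nat (Suc N) * ?W m (Suc N)) + (u + of_nat m) * (d (Suc N) * ?W m (Suc N))"
      by (simp add: algebra_simps)
    also have "\<dots> = (d N - d (Suc N)) * ((u + of_nat (m + N)) * ?W m N)
          + d (Suc N) * ((u + of_nat (m + N)) * ?W m N) + (u + of_nat m) * (d (Suc N) * ?W m (Suc N))"
      unfolding newton_weight_Suc_left newton_weight_Suc_right ..
    finally show ?thesis by (simp add: algebra_simps)
  qed
  have "(u + of_nat m) * (\<Sum>j<Suc (Suc N). d j * ?W m j)
      = (u + of_nat m) * (\<Sum>j<Suc N. d j * ?W m j) + (u + of_nat m) * (d (Suc N) * ?W m (Suc N))"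
    by (simp add: algebra_simps)
  also have "\<dots> = of_nat (Suc m) * (\<Sum>j<Suc N. (d j - d (Suc j)) * ?W (Suc m) j)
      + (u + of_nat (m + Suc N)) * (d (Suc N) * ?W m (Suc N))"
    unfolding Suc.IH using step by (simp add: algebra_simps)
  finally show ?case .
qed

lemma newton_expansion_step:
  fixes u :: "'a::{real_normed_field, field_char_0}"
  assumes sums: "(\<lambda>j. d j * newton_weight u m j) sums (newton_weight u m 0 * G)"
    and boundary: "(\<lambda>N. (u + of_nat (m + N)) * (d N * newton_weight u m N)) \<longlonglongrightarrow> 0"
  shows "(\<lambda>j. (d j - d (Suc j)) * newton_weight u (Suc m) j) sums (newton_weight u (Suc m) 0 * G)"
proof -
  let ?T = "\<lambda>j. d j * newton_weight u m j"
  let ?B = "\<lambda>N. (u + of_nat (m + N)) * (d N * newton_weight u m N)"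
  have partial: "(\<Sum>j<N. (d j - d (Suc j)) * newton_weight u (Suc m) j)
      = ((u + of_nat m) * (\<Sum>j<Suc N. ?T j) - ?B N) / of_nat (Suc m)" for N
    using summation_by_parts_newton_weight[of u m d N]
    by (simp add: eq_divide_eq algebra_simps del: of_nat_Suc)
  have lim: "(\<lambda>N. \<Sum>j<Suc N. ?T j) \<longlonglongrightarrow> newton_weight u m 0 * G"
    using sums unfolding sums_def by (rule LIMSEQ_Suc)
  have "(\<lambda>N. ((u + of_nat m) * (\<Sum>j<Suc N. ?T j) - ?B N) / of_nat (Suc m))
      \<longlonglongrightarrow> ((u + of_nat m) * (newton_weight u m 0 * G) - 0) / of_nat (Suc m)"
    by (intro tendsto_intros lim boundary) (simp del: of_nat_Suc)
  also have "((u + of_nat m) * (newton_weight u m 0 * G) - 0) / of_nat (Suc m) = newton_weight u (Suc m) 0 * G"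
    using newton_weight_Suc_left[of m u 0] by (simp add: field_simps del: of_nat_Suc)
  finally show ?thesis
    unfolding sums_def partial .
qed

lemma summable_nonneg_imp_weighted_limit_eq_0:
  fixes T :: "nat \<Rightarrow> real" and c :: real
  assumes summable: "summable T" and T_nonneg: "\<And>N. T N \<ge> 0" and c: "c \<ge> 0"
    and lim: "(\<lambda>N. (c + real N) * T N) \<longlonglongrightarrow> L"
  shows "L = 0"
proof (rule ccontr)
  assume "L \<noteq> 0"
  moreover have "L \<ge> 0"
    using lim T_nonneg c by (intro LIMSEQ_le_const) auto
  ultimately have L: "L > 0" by simp
  \<comment> \<open>then \<open>T N \<ge> L / (2 (c + N))\<close> eventually, which is not summable\<close>
  have "eventually (\<lambda>N. (c + real N) * T N > L / 2) sequentially"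
    using lim L by (intro order_tendstoD(1)) auto
  then have lower: "eventually (\<lambda>N. norm (1 / (c + real N)) \<le> 2 / L * norm (T N)) sequentially"
    using eventually_gt_at_top[of 0]
  proof eventually_elim
    case (elim N)
    then have pos: "c + real N > 0" using c by simp
    with elim L have "1 / (c + real N) \<le> 2 / L * T N"
      by (simp add: field_simps)
    with pos T_nonneg[of N] show ?case by simp
  qed
  have "(\<lambda>N. 1 / (c + real N)) \<in> O(T)"
    using landau_o.bigI[of "2 / L", OF _ lower] L by simp
  moreover have "(\<lambda>N. real N powr -1) \<in> O(\<lambda>N. 1 / (c + real N))"
    using c by real_asymp
  ultimately have "(\<lambda>N. real N powr -1) \<in> O(T)"
    by (rule landau_o.big_trans[rotated])
  moreover have "summable (\<lambda>N. norm (T N))"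
    using summable T_nonneg by (simp add: abs_of_nonneg)
  ultimately have "summable (\<lambda>N. real N powr -1)"
    by (elim summable_comparison_test_bigo[rotated])
  then show False by (subst (asm) summable_real_powr_iff) simp
qed

lemma newton_boundary_tendsto_zero:
  fixes u :: real and d :: "nat \<Rightarrow> real"
  assumes u: "u > 0" and d_nonneg: "\<And>j. d j \<ge> 0" and d_decr: "\<And>j. d (Suc j) \<le> d j"
    and summable: "summable (\<lambda>j. d j * newton_weight u m j)"
  shows "(\<lambda>N. (u + of_nat (m + N)) * (d N * newton_weight u m N)) \<longlonglongrightarrow> 0"
proof -
  let ?T = "\<lambda>j. d j * newton_weight u m j"
  let ?T' = "\<lambda>j. (d j - d (Suc j)) * newton_weight u (Suc m) j"
  let ?B = "\<lambda>N. (u + of_nat (m + N)) * (d N * newton_weight u m N)"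
  have T_nonneg: "?T j \<ge> 0" and T'_nonneg: "?T' j \<ge> 0" and B_nonneg: "?B j \<ge> 0" for j
    using d_nonneg d_decr[of j] newton_weight_nonneg[OF u] u by (auto intro!: mult_nonneg_nonneg)
  have by_parts: "(u + of_nat m) * (\<Sum>j<Suc N. ?T j) = of_nat (Suc m) * (\<Sum>j<N. ?T' j) + ?B N" for N
    by (rule summation_by_parts_newton_weight)
  have bound: "(\<Sum>j<N. ?T' j) \<le> (u + of_nat m) * suminf ?T / of_nat (Suc m)" for N
  proof -
    have "of_nat (Suc m) * (\<Sum>j<N. ?T' j) \<le> (u + of_nat m) * (\<Sum>j<Suc N. ?T j)"
      using by_parts[of N] B_nonneg[of N] by linarith
    also have "\<dots> \<le> (u + of_nat m) * suminf ?T"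
      using u summable T_nonneg by (intro mult_left_mono sum_le_suminf) auto
    finally show ?thesis by (simp add: field_simps del: of_nat_Suc)
  qed
  have "summable ?T'"
  proof (rule bounded_imp_summable[OF T'_nonneg])
    show "(\<Sum>j\<le>N. ?T' j) \<le> (u + of_nat m) * suminf ?T / of_nat (Suc m)" for N
      using bound[of "Suc N"] by (simp only: lessThan_Suc_atMost)
  qed
  have B_eq: "?B N = (u + of_nat m) * (\<Sum>j<Suc N. ?T j) - of_nat (Suc m) * (\<Sum>j<N. ?T' j)" for N
    using by_parts[of N] by (simp add: algebra_simps)
  have "(\<lambda>N. (u + of_nat m) * (\<Sum>j<Suc N. ?T j) - of_nat (Suc m) * (\<Sum>j<N. ?T' j))
      \<longlonglongrightarrow> (u + of_nat m) * suminf ?T - of_nat (Suc m) * suminf ?T'"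
    using LIMSEQ_Suc[OF summable_LIMSEQ[OF summable]] summable_LIMSEQ[OF \<open>summable ?T'\<close>]
    by (intro tendsto_intros)
  then have "?B \<longlonglongrightarrow> (u + of_nat m) * suminf ?T - of_nat (Suc m) * suminf ?T'"
    by (simp only: B_eq)
  then obtain L where B_lim: "?B \<longlonglongrightarrow> L" by blast
  then have "(\<lambda>N. (u + real m + real N) * ?T N) \<longlonglongrightarrow> L"
    by (simp add: add.assoc)
  then have "L = 0"
    using summable T_nonneg u by (intro summable_nonneg_imp_weighted_limit_eq_0[of ?T "u + real m"]) auto
  with B_lim show ?thesis by simp
qed

lemma newton_expansion_real:
  fixes u :: real and d :: "nat \<Rightarrow> nat \<Rightarrow> real"
  assumes u: "u > 0" and d_nonneg: "\<And>m j. d m j \<ge> 0"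
    and d_diff: "\<And>m j. d (Suc m) j = d m j - d m (Suc j)"
    and summable: "summable (\<lambda>j. d 0 j * newton_weight u 0 j)"
  shows "(\<lambda>j. d m j * newton_weight u m j) sums (newton_weight u m 0 * (\<Sum>j. d 0 j * newton_weight u 0 j))"
proof (induction m)
  case 0
  show ?case using summable by (simp add: newton_weight_def summable_sums)
next
  case (Suc m)
  have "d m (Suc j) \<le> d m j" for j
    using d_diff[of m j] d_nonneg[of "Suc m" j] by simp
  then have "(\<lambda>N. (u + of_nat (m + N)) * (d m N * newton_weight u m N)) \<longlonglongrightarrow> 0"
    using d_nonneg sums_summable[OF Suc.IH] by (intro newton_boundary_tendsto_zero[OF u])
  from newton_expansion_step[OF Suc.IH this] show ?case by (simp only: d_diff)
qed

lemma eventually_norm_add_of_nat_le: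
  fixes u :: complex and u0 :: real
  assumes less: "Re u < u0"
  shows "eventually (\<lambda>i. norm (u + of_nat i) \<le> u0 + of_nat i) sequentially"
proof -
  obtain N :: nat where N: "real N \<ge> (Im u)\<^sup>2 / (u0 - Re u) + \<bar>u0\<bar> + \<bar>Re u\<bar>"
    using real_arch_simple by blast
  have "norm (u + of_nat i) \<le> u0 + of_nat i" if "i \<ge> N" for i
  proof -
    have "(Im u)\<^sup>2 / (u0 - Re u) \<le> u0 + Re u + 2 * real i"
      using N that by linarith
    then have "(Im u)\<^sup>2 \<le> (u0 - Re u) * (u0 + Re u + 2 * real i)"
      using less by (simp add: divide_le_eq mult.commute)
    then have "(norm (u + of_nat i))\<^sup>2 \<le> (u0 + of_nat i)\<^sup>2"
      unfolding cmod_power2 by (simp add: power2_eq_square algebra_simps)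
    moreover have "u0 + of_nat i \<ge> 0"
      using N that less by (smt (verit) of_nat_le_iff zero_le_divide_iff zero_le_power2)
    ultimately show ?thesis
      by (rule power2_le_imp_le)
  qed
  then show ?thesis
    unfolding eventually_sequentially by blast
qed

lemma pochhammer_norm_le:
  fixes u :: complex and u0 :: real
  assumes u0: "u0 > 0" and less: "Re u < u0"
  shows "\<exists>M\<ge>0. \<forall>k. norm (pochhammer u k) \<le> M * pochhammer u0 k"
proof -
  obtain N where factor_le: "\<And>i. i \<ge> N \<Longrightarrow> norm (u + of_nat i) \<le> u0 + of_nat i"
    using eventually_norm_add_of_nat_le[OF less] unfolding eventually_sequentially by blast
  define M where "M = (\<Sum>k\<le>N. norm (pochhammer u k) / pochhammer u0 k)"
  have poch_pos: "pochhammer u0 k > 0" for k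
    using u0 by (rule pochhammer_pos)
  have initial: "norm (pochhammer u k) \<le> M * pochhammer u0 k" if "k \<le> N" for k
  proof -
    have "norm (pochhammer u k) / pochhammer u0 k \<le> M"
      unfolding M_def using that poch_pos by (intro member_le_sum divide_nonneg_pos norm_ge_zero) auto
    with poch_pos[of k] show ?thesis by (simp add: divide_le_eq)
  qed
  have M_nonneg: "M \<ge> 0"
    unfolding M_def using poch_pos by (intro sum_nonneg divide_nonneg_pos norm_ge_zero)
  have tail: "norm (pochhammer u (N + k)) \<le> M * pochhammer u0 (N + k)" for k
  proof (induction k)
    case 0
    show ?case using initial[of N] by simp
  next
    case (Suc k)
    have "norm (pochhammer u (N + Suc k)) = norm (pochhammer u (N + k)) * norm (u + of_nat (N + k))"
      by (simp add: pochhammer_rec' norm_mult)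
    also have "\<dots> \<le> (M * pochhammer u0 (N + k)) * (u0 + of_nat (N + k))"
      using Suc.IH factor_le[of "N + k"] M_nonneg poch_pos[of "N + k"] by (intro mult_mono) auto
    also have "\<dots> = M * pochhammer u0 (N + Suc k)"
      by (simp add: pochhammer_rec')
    finally show ?case .
  qed
  have "norm (pochhammer u k) \<le> M * pochhammer u0 k" for k
  proof (cases "k \<le> N")
    case False
    then show ?thesis using tail[of "k - N"] by simp
  qed (rule initial)
  with M_nonneg show ?thesis by blast
qed

lemma newton_weight_norm_le:
  fixes u :: complex and u0 :: real
  assumes "u0 > 0" and "Re u < u0"
  obtains M where "\<And>m j. norm (newton_weight u m j) \<le> M * newton_weight u0 m j"
proof -
  obtain M where M: "\<And>k. norm (pochhammer u k) \<le> M * pochhammer u0 k"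
    using pochhammer_norm_le[OF assms] by blast
  have "norm (newton_weight u m j) \<le> M * newton_weight u0 m j" for m j
    using M[of "m + j"] unfolding newton_weight_def by (simp add: norm_divide norm_mult divide_right_mono)
  then show ?thesis by (rule that)
qed

lemma norm_newton_boundary_le:
  fixes u :: complex and u0 :: real
  assumes "\<And>j. norm (newton_weight u m j) \<le> M * newton_weight u0 m j"
  shows "norm ((u + of_nat (m + N)) * newton_weight u m N) \<le> M * ((u0 + of_nat (m + N)) * newton_weight u0 m N)"
proof -
  \<comment> \<open>shifting \<open>N\<close> moves the factor \<open>u + m + N\<close> into the weight, where \<open>M\<close> controls it\<close>
  have "norm ((u + of_nat (m + N)) * newton_weight u m N) = of_nat (Suc N) * norm (newton_weight u m (Suc N))"
    unfolding newton_weight_Suc_right[symmetric] by (simp add: norm_mult del: of_nat_Suc)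
  also have "\<dots> \<le> of_nat (Suc N) * (M * newton_weight u0 m (Suc N))"
    using assms by (rule mult_left_mono) simp
  also have "\<dots> = M * ((u0 + of_nat (m + N)) * newton_weight u0 m N)"
    unfolding newton_weight_Suc_right[symmetric] by (simp only: ac_simps)
  finally show ?thesis .
qed

lemma newton_expansion_complex:
  fixes u :: complex and u0 :: real and d :: "nat \<Rightarrow> nat \<Rightarrow> complex" and dR :: "nat \<Rightarrow> nat \<Rightarrow> real"
  assumes u0: "u0 > 0" and less: "Re u < u0"
    and d_real: "\<And>m j. d m j = of_real (dR m j)" and dR_nonneg: "\<And>m j. dR m j \<ge> 0"
    and dR_diff: "\<And>m j. dR (Suc m) j = dR m j - dR m (Suc j)"
    and summable: "summable (\<lambda>j. dR 0 j * newton_weight u0 0 j)"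
  shows "(\<lambda>j. d m j * newton_weight u m j) sums (newton_weight u m 0 * (\<Sum>j. d 0 j * newton_weight u 0 j))"
proof -
  obtain M where M: "\<And>m j. norm (newton_weight u m j) \<le> M * newton_weight u0 m j"
    using newton_weight_norm_le[OF u0 less] by blast
  have dominated: "norm (d m j * newton_weight u m j) \<le> M * (dR m j * newton_weight u0 m j)" for m j
  proof -
    have "norm (d m j * newton_weight u m j) = dR m j * norm (newton_weight u m j)"
      using dR_nonneg by (simp add: d_real norm_mult)
    also have "\<dots> \<le> dR m j * (M * newton_weight u0 m j)"
      using M dR_nonneg by (rule mult_left_mono)
    finally show ?thesis by (simp only: ac_simps)
  qed
  show ?thesis
  proof (induction m)
    case 0
    have "summable (\<lambda>j. d 0 j * newton_weight u 0 j)"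
      by (rule summable_comparison_test'[OF summable_mult[OF summable, of M] dominated])
    then show ?case by (simp add: newton_weight_def summable_sums)
  next
    case (Suc m)
    let ?B = "\<lambda>N. (u + of_nat (m + N)) * (d m N * newton_weight u m N)"
    let ?BR = "\<lambda>N. (u0 + of_nat (m + N)) * (dR m N * newton_weight u0 m N)"
    have BR_lim: "?BR \<longlonglongrightarrow> 0"
    proof (rule newton_boundary_tendsto_zero[OF u0 dR_nonneg])
      show "dR m (Suc j) \<le> dR m j" for j
        using dR_diff[of m j] dR_nonneg[of "Suc m" j] by simp
      show "summable (\<lambda>j. dR m j * newton_weight u0 m j)"
        by (rule sums_summable[OF newton_expansion_real[OF u0 dR_nonneg dR_diff summable]])
    qed
    have B_le: "norm (?B N) \<le> M * ?BR N" for N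
    proof -
      have "norm (?B N) = dR m N * norm ((u + of_nat (m + N)) * newton_weight u m N)"
        using dR_nonneg by (simp add: d_real norm_mult)
      also have "\<dots> \<le> dR m N * (M * ((u0 + of_nat (m + N)) * newton_weight u0 m N))"
        using norm_newton_boundary_le[OF M] dR_nonneg by (rule mult_left_mono)
      also have "\<dots> = M * ?BR N"
        by (simp only: ac_simps)
      finally show ?thesis .
    qed
    have "?B \<longlonglongrightarrow> 0"
      using B_le by (intro Lim_null_comparison[OF always_eventually tendsto_mult_right_zero[OF BR_lim]] allI)
    from newton_expansion_step[OF Suc.IH this] show ?case
      by (simp add: d_real dR_diff)
  qed
qed

lemma pochhammer_div_fact_bigo:
  fixes u :: real
  assumes u: "u > 0"
  shows "(\<lambda>n. pochhammer u n / fact n) \<in> O(\<lambda>n. real n powr (u - 1))"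
proof (rule bigoI_tendsto)
  show "eventually (\<lambda>n. real n powr (u - 1) \<noteq> 0) at_top"
    using eventually_gt_at_top[of 0] by eventually_elim simp
  \<comment> \<open>Euler's limit formula \<open>n! n^u / (u)\<^sub>n\<^sub>+\<^sub>1 \<longrightarrow> \<Gamma>(u)\<close>\<close>
  have "(\<lambda>n. inverse (Gamma_series u n) * (real n / (u + real n))) \<longlonglongrightarrow> inverse (Gamma u) * 1"
    using Gamma_real_pos[OF u] by (intro tendsto_intros Gamma_series_LIMSEQ) (simp, real_asymp)
  moreover have "eventually (\<lambda>n. inverse (Gamma_series u n) * (real n / (u + real n))
      = pochhammer u n / fact n / real n powr (u - 1)) at_top"
    using eventually_gt_at_top[of 0]
  proof eventually_elim
    case (elim n)
    define s where "s = u + real n"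
    have G: "Gamma_series u n = fact n * real n powr u / (pochhammer u n * s)"
      using elim by (simp add: Gamma_series_def pochhammer_rec' powr_def s_def mult.commute)
    have P: "real n powr (u - 1) = real n powr u / real n"
      using elim by (simp add: powr_diff)
    have "s > 0" "real n powr u > 0" "pochhammer u n > 0"
      using elim u by (simp_all add: s_def pochhammer_pos)
    with elim show ?case
      unfolding s_def[symmetric] G P by (simp add: field_simps)
  qed
  ultimately show "((\<lambda>n. pochhammer u n / fact n / real n powr (u - 1)) \<longlongrightarrow> inverse (Gamma u)) at_top"
    by (simp add: tendsto_cong)
qed

lemma summable_mult_newton_weight:
  fixes b :: "nat \<Rightarrow> real" and u \<epsilon> :: real
  assumes u: "0 < u" "u < \<epsilon>" and b: "b \<in> O(\<lambda>n. real n powr - \<epsilon>)"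
  shows "summable (\<lambda>n. b n * newton_weight u 0 n)"
proof (rule summable_comparison_test_bigo)
  have "(\<lambda>n. b n * newton_weight u 0 n) \<in> O(\<lambda>n. real n powr - \<epsilon> * real n powr (u - 1))"
    using landau_o.big.mult[OF b pochhammer_div_fact_bigo[OF u(1)]] by (simp add: newton_weight_def)
  then show "(\<lambda>n. b n * newton_weight u 0 n) \<in> O(\<lambda>n. real n powr (u - 1 - \<epsilon>))"
    by (simp add: powr_add[symmetric])
  show "summable (\<lambda>n. norm (real n powr (u - 1 - \<epsilon>)))"
    using u by (simp add: summable_real_powr_iff)
qed

lemma has_sum_diagonals_sums:
  fixes h :: "nat \<times> nat \<Rightarrow> 'a::{topological_comm_monoid_add, t3_space}"
  assumes "(h has_sum S) UNIV"
  shows "(\<lambda>k. \<Sum>m\<le>k. h (m, k - m)) sums S"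
proof -
  have "((\<lambda>(k, m). h (m, k - m)) has_sum S) (SIGMA k:UNIV. {..k})"
    using assms
    by (subst has_sum_reindex_bij_witness[where i = "\<lambda>(m, j). (m + j, m)" and j = "\<lambda>(k, m). (m, k - m)"])
       auto
  then have "((\<lambda>k. \<Sum>m\<le>k. h (m, k - m)) has_sum S) UNIV"
    by (rule has_sum_SigmaD) simp
  then show ?thesis by (rule has_sum_imp_sums)
qed

lemma has_sum_rows_sums:
  fixes h :: "nat \<times> nat \<Rightarrow> 'a::banach"
  assumes sum: "(h has_sum S) UNIV" and rows: "\<And>m. (\<lambda>j. h (m, j)) sums r m"
  shows "r sums S"
proof -
  have rows_has_sum: "((\<lambda>j. h (m, j)) has_sum r m) UNIV" for m
  proof -
    have "h summable_on range (Pair m)"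
      using summable_on_subset_banach[OF has_sum_imp_summable[OF sum] subset_UNIV] .
    then have "(\<lambda>j. h (m, j)) summable_on UNIV"
      by (subst (asm) summable_on_reindex) (auto simp: inj_on_def o_def)
    then have "((\<lambda>j. h (m, j)) has_sum infsum (\<lambda>j. h (m, j)) UNIV) UNIV"
      by (rule has_sum_infsum)
    moreover have "infsum (\<lambda>j. h (m, j)) UNIV = r m"
      using has_sum_imp_sums[OF calculation] rows sums_unique2 by blast
    ultimately show ?thesis by simp
  qed
  have "(r has_sum S) (UNIV :: nat set)"
    using has_sum_SigmaD[where A = UNIV and B = "\<lambda>_. UNIV"] sum rows_has_sum by auto
  then show ?thesis by (rule has_sum_imp_sums)
qed

lemma newton_majorant_summable_on:
  fixes u0 :: real and aR :: "nat \<Rightarrow> real" and dR :: "nat \<Rightarrow> nat \<Rightarrow> real"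
  assumes u0: "u0 > 0" and aR_nonneg: "\<And>m. aR m \<ge> 0" and dR_nonneg: "\<And>m j. dR m j \<ge> 0"
    and dR_diff: "\<And>m j. dR (Suc m) j = dR m j - dR m (Suc j)"
    and summable_a: "summable (\<lambda>m. aR m * newton_weight u0 m 0)"
    and summable_d: "summable (\<lambda>j. dR 0 j * newton_weight u0 0 j)"
  shows "(\<lambda>(m, j). aR m * (dR m j * newton_weight u0 m j)) summable_on UNIV"
proof -
  define GR where "GR = (\<Sum>j. dR 0 j * newton_weight u0 0 j)"
  define H where "H = (\<lambda>(m, j). aR m * (dR m j * newton_weight u0 m j))"
  have H_nonneg: "H p \<ge> 0" for p
    unfolding H_def using aR_nonneg dR_nonneg newton_weight_nonneg[OF u0] by (auto split: prod.split)
  have "H summable_on (SIGMA m:UNIV. UNIV)"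
  proof (rule summable_on_SigmaI)
    show "((\<lambda>j. H (m, j)) has_sum aR m * (newton_weight u0 m 0 * GR)) UNIV" for m
    proof (rule sums_nonneg_imp_has_sum)
      show "(\<lambda>j. H (m, j)) sums (aR m * (newton_weight u0 m 0 * GR))"
        unfolding H_def GR_def
        using sums_mult[OF newton_expansion_real[OF u0 dR_nonneg dR_diff summable_d], of "aR m" m] by simp
    qed (rule H_nonneg)
    show "(\<lambda>m. aR m * (newton_weight u0 m 0 * GR)) summable_on UNIV"
      using summable_mult2[OF summable_a, of GR] aR_nonneg newton_weight_nonneg[OF u0]
        summable_on_UNIV_nonneg_real_iff[of "\<lambda>m. aR m * (newton_weight u0 m 0 * GR)"]
      by (simp add: GR_def mult.assoc suminf_nonneg summable_d dR_nonneg)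
  qed (use H_nonneg in auto)
  then show ?thesis by (simp add: H_def)
qed

lemma newton_double_family_summable_on:
  fixes u :: complex and u0 :: real and a :: "nat \<Rightarrow> complex" and aR :: "nat \<Rightarrow> real"
    and d :: "nat \<Rightarrow> nat \<Rightarrow> complex" and dR :: "nat \<Rightarrow> nat \<Rightarrow> real"
  assumes u0: "u0 > 0" and less: "Re u < u0"
    and a_real: "\<And>m. a m = of_real (aR m)" and aR_nonneg: "\<And>m. aR m \<ge> 0"
    and d_real: "\<And>m j. d m j = of_real (dR m j)" and dR_nonneg: "\<And>m j. dR m j \<ge> 0"
    and dR_diff: "\<And>m j. dR (Suc m) j = dR m j - dR m (Suc j)"
    and summable_a: "summable (\<lambda>m. aR m * newton_weight u0 m 0)"
    and summable_d: "summable (\<lambda>j. dR 0 j * newton_weight u0 0 j)"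
  shows "(\<lambda>(m, j). a m * (d m j * newton_weight u m j)) summable_on UNIV"
proof -
  obtain M where M: "\<And>m j. norm (newton_weight u m j) \<le> M * newton_weight u0 m j"
    using newton_weight_norm_le[OF u0 less] by blast
  define h where "h = (\<lambda>(m, j). a m * (d m j * newton_weight u m j))"
  define H where "H = (\<lambda>(m, j). aR m * (dR m j * newton_weight u0 m j))"
  have h_le: "norm (h p) \<le> M * H p" for p
  proof (cases p)
    case (Pair m j)
    have "norm (h p) = aR m * (dR m j * norm (newton_weight u m j))"
      unfolding Pair h_def using aR_nonneg dR_nonneg by (simp add: a_real d_real norm_mult)
    also have "\<dots> \<le> aR m * (dR m j * (M * newton_weight u0 m j))"
      using aR_nonneg dR_nonneg M by (intro mult_left_mono) auto
    also have "\<dots> = M * H p"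
      unfolding Pair H_def by (simp only: ac_simps prod.case)
    finally show ?thesis .
  qed
  have "(\<lambda>p. M * H p) summable_on UNIV"
    using newton_majorant_summable_on[OF u0 aR_nonneg dR_nonneg dR_diff summable_a summable_d]
    by (simp add: H_def summable_on_cmult_right)
  then have "(\<lambda>p. norm (h p)) summable_on UNIV"
    by (rule Infinite_Sum.abs_summable_on_comparison_test') (rule h_le)
  then show ?thesis
    unfolding h_def by (rule Infinite_Sum.abs_summable_summable)
qed

lemma newton_product_expansion:
  fixes u :: complex and u0 :: real and a :: "nat \<Rightarrow> complex" and aR :: "nat \<Rightarrow> real"
    and d :: "nat \<Rightarrow> nat \<Rightarrow> complex" and dR :: "nat \<Rightarrow> nat \<Rightarrow> real"
  assumes u0: "u0 > 0" and less: "Re u < u0"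
    and a_real: "\<And>m. a m = of_real (aR m)" and aR_nonneg: "\<And>m. aR m \<ge> 0"
    and d_real: "\<And>m j. d m j = of_real (dR m j)" and dR_nonneg: "\<And>m j. dR m j \<ge> 0"
    and dR_diff: "\<And>m j. dR (Suc m) j = dR m j - dR m (Suc j)"
    and summable_a: "summable (\<lambda>m. aR m * newton_weight u0 m 0)"
    and summable_d: "summable (\<lambda>j. dR 0 j * newton_weight u0 0 j)"
  shows "(\<lambda>k. (\<Sum>m\<le>k. a m * d m (k - m) * of_nat (k choose m)) * newton_weight u k 0)
           sums ((\<Sum>m. a m * newton_weight u m 0) * (\<Sum>j. d 0 j * newton_weight u 0 j))"
proof -
  define G where "G = (\<Sum>j. d 0 j * newton_weight u 0 j)"
  define h where "h = (\<lambda>(m, j). a m * (d m j * newton_weight u m j))"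
  obtain S where S: "(h has_sum S) UNIV"
    using newton_double_family_summable_on[OF assms] unfolding h_def summable_on_def by blast
  obtain M where M: "\<And>m j. norm (newton_weight u m j) \<le> M * newton_weight u0 m j"
    using newton_weight_norm_le[OF u0 less] by blast
  have rows: "(\<lambda>j. h (m, j)) sums (a m * newton_weight u m 0 * G)" for m
    unfolding h_def G_def using newton_expansion_complex[OF u0 less d_real dR_nonneg dR_diff summable_d, of m]
    by (simp add: sums_mult mult.assoc)
  have "summable (\<lambda>m. a m * newton_weight u m 0)"
  proof (rule summable_comparison_test'[OF summable_mult[OF summable_a, of M]])
    show "norm (a m * newton_weight u m 0) \<le> M * (aR m * newton_weight u0 m 0)" for m
      using mult_left_mono[OF M[of m 0] aR_nonneg[of m]] aR_nonneg[of m]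
      by (simp add: a_real norm_mult mult.left_commute)
  qed
  then have "(\<lambda>m. a m * newton_weight u m 0 * G) sums ((\<Sum>m. a m * newton_weight u m 0) * G)"
    by (intro sums_mult2 summable_sums)
  with has_sum_rows_sums[OF S rows] have S_eq: "S = (\<Sum>m. a m * newton_weight u m 0) * G"
    by (rule sums_unique2)
  have "h (m, k - m) = a m * d m (k - m) * of_nat (k choose m) * newton_weight u k 0" if "m \<le> k" for m k
    using that newton_weight_eq_binomial[of u m "k - m"] by (simp add: h_def)
  then have "(\<Sum>m\<le>k. h (m, k - m)) = (\<Sum>m\<le>k. a m * d m (k - m) * of_nat (k choose m)) * newton_weight u k 0" for k
    by (simp add: sum_distrib_right)
  with has_sum_diagonals_sums[OF S] show ?thesis
    by (simp add: S_eq G_def)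
qed

lemma summable_newton_term_if_abscissa_less:
  assumes "newton_abscissa a < ereal (Re z)"
  shows "summable (newton_term a z)"
proof -
  obtain \<sigma> where "\<sigma> < Re z" and "\<forall>z. Re z > \<sigma> \<longrightarrow> summable (newton_term a z)"
    using assms unfolding newton_abscissa_def by (auto simp: Inf_less_iff)
  then show ?thesis by blast
qed

lemma complex_nonneg_eq_of_real: "(x::complex) \<ge> 0 \<Longrightarrow> x = of_real (Re x) \<and> Re x \<ge> 0"
  by (simp add: less_eq_complex_def complex_eq_iff)

lemma newton_series_product_sums:
  fixes a :: "nat \<Rightarrow> complex" and aR :: "nat \<Rightarrow> real"
    and d :: "nat \<Rightarrow> nat \<Rightarrow> complex" and dR :: "nat \<Rightarrow> nat \<Rightarrow> real" and \<epsilon> :: real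
  assumes a_real: "\<And>m. a m = of_real (aR m)" and aR_nonneg: "\<And>m. aR m \<ge> 0"
    and d_real: "\<And>m j. d m j = of_real (dR m j)" and dR_nonneg: "\<And>m j. dR m j \<ge> 0"
    and dR_diff: "\<And>m j. dR (Suc m) j = dR m j - dR m (Suc j)"
    and decay: "dR 0 \<in> O(\<lambda>n. real n powr - \<epsilon>)"
    and z: "max (newton_abscissa a) (ereal (- \<epsilon>)) < ereal (min 0 (Re z))"
  shows "newton_term (\<lambda>k. \<Sum>m\<le>k. a m * d m (k - m) * of_nat (k choose m)) z
           sums (newton_series a z * newton_series (d 0) z)"
proof -
  obtain x0 where x0: "max (newton_abscissa a) (ereal (- \<epsilon>)) < ereal x0" "x0 < min 0 (Re z)"
    using ereal_dense2[OF z] by (metis ereal_less_eq(3) order.strict_iff_order)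
  then have u0: "- x0 > 0" "- x0 < \<epsilon>" "Re (- z) < - x0" by auto
  have "summable (newton_term a (of_real x0))"
    using x0 by (intro summable_newton_term_if_abscissa_less) auto
  moreover have "newton_term a (of_real x0) = (\<lambda>m. of_real (aR m * newton_weight (- x0) m 0))"
    by (simp add: fun_eq_iff newton_term_eq_weight a_real flip: newton_weight_of_real)
  ultimately have summable_a: "summable (\<lambda>m. aR m * newton_weight (- x0) m 0)"
    by (simp only: summable_complex_of_real)
  have summable_d: "summable (\<lambda>j. dR 0 j * newton_weight (- x0) 0 j)"
    using u0 decay by (intro summable_mult_newton_weight[of _ \<epsilon>])
  show ?thesis
    using newton_product_expansion[OF u0(1,3) a_real aR_nonneg d_real dR_nonneg dR_diff summable_a summable_d]
    unfolding newton_series_def newton_term_eq_weight newton_weight_swap[of _ 0]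
    by simp
qed

theorem proposition3p9:
  fixes a b :: "nat \<Rightarrow> complex" and \<epsilon> :: real
  assumes "\<epsilon> > 0"
    and "\<And>m. a m \<ge> 0"
    and "\<And>l m. (fdiff ^^ l) b m \<ge> 0"
    and "newton_abscissa a < 0"
    and "\<And>l. (\<lambda>m. (fdiff ^^ l) b m) \<in> O(\<lambda>m. complex_of_real (real m powr (- (real l + \<epsilon>))))"
  shows "\<exists>c :: nat \<Rightarrow> complex. \<forall>z. ereal (Re z) > max (newton_abscissa a) (ereal (- \<epsilon>)) \<longrightarrow>
           newton_term c z sums (newton_series a z * newton_series b z)"
proof (intro exI allI impI)
  note \<epsilon> = assms(1) and a_nonneg = assms(2) and diff_nonneg = assms(3)
    and abscissa = assms(4) and diff_bigo = assms(5)
  fix z :: complex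
  assume "ereal (Re z) > max (newton_abscissa a) (ereal (- \<epsilon>))"
  with abscissa \<epsilon> have z: "max (newton_abscissa a) (ereal (- \<epsilon>)) < ereal (min 0 (Re z))"
    by (auto simp: min_def zero_ereal_def)
  define d where "d m = (fdiff ^^ m) b" for m
  define dR where "dR m j = Re (d m j)" for m j
  have a_real: "a m = of_real (Re (a m))" and aR_nonneg: "Re (a m) \<ge> 0" for m
    using complex_nonneg_eq_of_real[OF a_nonneg] by blast+
  have d_real: "d m j = of_real (dR m j)" and dR_nonneg: "dR m j \<ge> 0" for m j
    using complex_nonneg_eq_of_real[OF diff_nonneg] unfolding d_def dR_def by blast+
  have dR_diff: "dR (Suc m) j = dR m j - dR m (Suc j)" for m j
    by (simp add: dR_def d_def fdiff_def)
  have "(\<lambda>j. of_real (dR 0 j)) \<in> O(\<lambda>n. complex_of_real (real n powr - \<epsilon>))"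
    using diff_bigo[of 0] d_real[of 0] by (simp add: d_def)
  then have decay: "dR 0 \<in> O(\<lambda>n. real n powr - \<epsilon>)"
    by (simp add: landau_o.big.of_real_iff)
  from newton_series_product_sums[OF a_real aR_nonneg d_real dR_nonneg dR_diff decay z]
  show "newton_term (\<lambda>k. \<Sum>m\<le>k. a m * d m (k - m) * of_nat (k choose m)) z
          sums (newton_series a z * newton_series b z)"
    by (simp add: d_def)
qed

end
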